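(* For $0<\alpha<1$ let $$u(\alpha)=\int_{\alpha}^{1}\frac{(1-\rho^2)^{\frac{2m-1}{2}}}{\{1-(1-\rho^2)^m\}^{\frac{2m-1}{2m}}}\,d\rho .$$ Then $u$ is finite on $(0,1)$, $u(\alpha)\to0$ and $u'(\alpha)\to0$ as $\alpha\to1^-$, and $u(\alpha)\to+\infty$ as $\alpha\to0^+$. The rotational surfaces $(\alpha\cos v,\alpha\sin v,\pm u(\alpha))$, $0<\alpha<1$, have constant Minkowski Gaussian curvature $-1$.
   Context: Fix an integer $m\ge 2$. Let $\Phi(x_1,x_2,x_3)=(x_1^2+x_2^2)^m+x_3^{2m}$ and let $\|\cdot\|$ be the norm on $\mathbb{R}^3$ whose unit sphere is $S=\{x\in\mathbb{R}^3:\Phi(x)=1\}$ (a smooth, strictly convex surface). For a surface given by a parametrization $f(s,v)$, its Birkhoff–Gauss map $\eta$ is the map into $S$ defined by requiring $\eta\in S$ and $\nabla\Phi(\eta)=\mu\, f_s\times f_v$ for some function $\mu>0$, where $\times$ is the standard cross product (so the tangent plane of $S$ at $\eta(p)$ is parallel to $T_pM$, and $d\eta_p$ is an endomorphism of $T_pM$). The Minkowski Gaussian curvature is $K=\det(d\eta_p)$ (independent of orientation). *)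

theory Defs
  imports "HOL-Analysis.Analysis"
begin

text \<open>The gauge function Phi(x) = (x1^2+x2^2)^m + x3^(2m); the unit sphere S is Phi = 1.\<close>
definition Phi :: "nat \<Rightarrow> real^3 \<Rightarrow> real" where
  "Phi m x = ((x$1)^2 + (x$2)^2)^m + (x$3)^(2*m)"

definition d_s :: "(real \<Rightarrow> real \<Rightarrow> real^3) \<Rightarrow> real \<Rightarrow> real \<Rightarrow> real^3" where
  "d_s f s v = vector_derivative (\<lambda>t. f t v) (at s)"

definition d_v :: "(real \<Rightarrow> real \<Rightarrow> real^3) \<Rightarrow> real \<Rightarrow> real \<Rightarrow> real^3" where
  "d_v f s v = vector_derivative (\<lambda>t. f s t) (at v)"

definition bg_map :: "nat \<Rightarrow> (real \<Rightarrow> real \<Rightarrow> real^3) \<Rightarrow> real \<Rightarrow> real \<Rightarrow> real^3" where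
  "bg_map m f s v = (THE y. Phi m y = 1 \<and>
     (\<exists>\<mu>>0. (Phi m has_derivative (\<lambda>h. (\<mu> *\<^sub>R cross3 (d_s f s v) (d_v f s v)) \<bullet> h)) (at y)))"

text \<open>Matrix of d eta_p in the basis (f_s, f_v) of T_pM (columns = images of f_s, f_v),
  and the Minkowski Gaussian curvature K = det(d eta_p).\<close>
definition dbg_matrix :: "nat \<Rightarrow> (real \<Rightarrow> real \<Rightarrow> real^3) \<Rightarrow> real \<Rightarrow> real \<Rightarrow> real^2^2" where
  "dbg_matrix m f s v = (THE M::real^2^2.
      d_s (bg_map m f) s v = M$1$1 *\<^sub>R d_s f s v + M$2$1 *\<^sub>R d_v f s v \<and>
      d_v (bg_map m f) s v = M$1$2 *\<^sub>R d_s f s v + M$2$2 *\<^sub>R d_v f s v)"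

definition mink_gauss_curv :: "nat \<Rightarrow> (real \<Rightarrow> real \<Rightarrow> real^3) \<Rightarrow> real \<Rightarrow> real \<Rightarrow> real" where
  "mink_gauss_curv m f s v = det (dbg_matrix m f s v)"

definition integrand :: "nat \<Rightarrow> real \<Rightarrow> real" where
  "integrand m \<rho> = (1 - \<rho>^2) powr ((2 * real m - 1) / 2) /
      (1 - (1 - \<rho>^2)^m) powr ((2 * real m - 1) / (2 * real m))"

definition u_fun :: "nat \<Rightarrow> real \<Rightarrow> real" where
  "u_fun m \<alpha> = integral {\<alpha>..1} (integrand m)"

end

theory Submission
  imports Defs
begin

text \<open>Write r = sqrt(1 - rho^2) and h = (1 - r^2m)^(1/2m), so that (r, h) lies on the meridian
  r^2m + h^2m = 1 of S and the integrand equals (r/h)^(2m-1) = -u'. Then the gradient of Phi at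
  (sigma r cos v, sigma r sin v, h) is a positive multiple of f_s x f_v, so this point is the
  Birkhoff--Gauss image, and it is unique because the gradient of Phi is injective and homogeneous.
  Differentiating gives eta_s = -(sigma rho / r) f_s and eta_v = (sigma r / rho) f_v, whence
  K = -sigma^2 = -1. The analytic claims follow from continuity of the integrand on (0,1], its
  vanishing at 1, and the lower bound c / rho near 0, which makes u grow like -log alpha.\<close>

lemma integrand_nonneg: "0 \<le> integrand m \<rho>"
  unfolding integrand_def by simp

lemma integrand_at_1 [simp]: "integrand m 1 = 0"
  by (simp add: integrand_def)

lemma one_minus_power_pos:
  fixes \<rho> :: real
  assumes "m \<ge> 1" "0 < \<rho>" "\<rho> \<le> 1"
  shows "0 < 1 - (1 - \<rho>^2)^m"
proof -
  have "0 \<le> 1 - \<rho>^2" "1 - \<rho>^2 < 1"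
    using assms by (auto simp: power_le_one)
  then show ?thesis
    using assms(1) by (simp add: power_less_one_iff)
qed

lemma continuous_on_integrand:
  assumes "m \<ge> 1" "0 < a"
  shows "continuous_on {a..1} (integrand m)"
proof -
  have pos: "\<forall>\<rho>\<in>{a..1}. 0 < 1 - (1 - \<rho>^2)^m"
    using one_minus_power_pos assms by auto
  show ?thesis
    unfolding integrand_def
  proof (intro continuous_on_divide continuous_on_powr' continuous_on_powr ballI)
    show "\<And>\<rho>. \<rho> \<in> {a..1} \<Longrightarrow> (1 - (1 - \<rho>^2)^m) powr ((2 * real m - 1) / (2 * real m)) \<noteq> 0"
      using pos by fastforce
  qed (use assms pos in \<open>auto intro!: continuous_intros less_imp_le simp: abs_square_le_1\<close>)
qed

lemma integrable_integrand:
  assumes "m \<ge> 1" "0 < a"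
  shows "integrand m integrable_on {a..1}"
  using integrable_continuous_real[OF continuous_on_integrand[OF assms]] .

lemma has_real_derivative_u_fun:
  assumes m: "m \<ge> 1" and \<alpha>: "0 < \<alpha>" "\<alpha> < 1"
  shows "(u_fun m has_real_derivative - integrand m \<alpha>) (at \<alpha>)"
proof -
  define a where "a = \<alpha> / 2"
  have a: "0 < a" "a < \<alpha>" using \<alpha> by (auto simp: a_def)
  have "((\<lambda>x. integral {a..x} (integrand m)) has_real_derivative integrand m \<alpha>) (at \<alpha> within {a..1})"
    by (rule integral_has_real_derivative[OF continuous_on_integrand[OF m a(1)]]) (use a \<alpha> in auto)
  moreover have "at \<alpha> within {a..1} = at \<alpha>"
    by (rule at_within_Icc_at) (use a \<alpha> in auto)
  ultimately have "((\<lambda>x. integral {a..1} (integrand m) - integral {a..x} (integrand m))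
      has_real_derivative - integrand m \<alpha>) (at \<alpha>)"
    using DERIV_diff[OF DERIV_const] by fastforce
  then show ?thesis
  proof (rule has_field_derivative_transform_within_open[where S = "{a<..<1}"])
    fix x assume "x \<in> {a<..<1}"
    then have "integral {a..x} (integrand m) + integral {x..1} (integrand m) = integral {a..1} (integrand m)"
      using integrable_integrand[OF m a(1)] by (intro Henstock_Kurzweil_Integration.integral_combine) auto
    then show "integral {a..1} (integrand m) - integral {a..x} (integrand m) = u_fun m x"
      unfolding u_fun_def by simp
  qed (use a \<alpha> in auto)
qed

lemma deriv_u_fun:
  assumes "m \<ge> 1" "0 < \<alpha>" "\<alpha> < 1"
  shows "deriv (u_fun m) \<alpha> = - integrand m \<alpha>"
  using DERIV_imp_deriv[OF has_real_derivative_u_fun[OF assms]] .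

lemma tendsto_u_fun_at_left_1:
  assumes "m \<ge> 1"
  shows "(u_fun m \<longlongrightarrow> 0) (at_left 1)"
proof -
  have "continuous_on {1/2..1} (\<lambda>x. integral {x..1} (integrand m))"
    by (rule indefinite_integral_continuous_1'[OF integrable_integrand[OF assms]]) simp
  from continuous_on_Icc_at_leftD[OF this] show ?thesis
    by (simp add: u_fun_def[abs_def])
qed

lemma tendsto_deriv_u_fun_at_left_1:
  assumes "m \<ge> 1"
  shows "(deriv (u_fun m) \<longlongrightarrow> 0) (at_left 1)"
proof -
  have lim: "((\<lambda>x. - integrand m x) \<longlongrightarrow> 0) (at_left 1)"
    using tendsto_minus[OF continuous_on_Icc_at_leftD[OF continuous_on_integrand[OF assms, of "1/2"]]]
    by simp
  have "eventually (\<lambda>x. x \<in> {0<..<1::real}) (at_left 1)"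
    by (rule eventually_at_left_real) simp
  then have "eventually (\<lambda>x. - integrand m x = deriv (u_fun m) x) (at_left 1)"
    by eventually_elim (simp add: deriv_u_fun[OF assms])
  with lim show ?thesis
    using tendsto_cong by fastforce
qed

lemma one_minus_power_le:
  fixes \<rho> :: real
  assumes "\<rho>^2 \<le> 1"
  shows "1 - (1 - \<rho>^2)^m \<le> real m * \<rho>^2"
  using Bernoulli_inequality[of "-(\<rho>^2)" m] assms by simp

lemma integrand_ge_inverse:
  assumes m: "m \<ge> 1" and \<rho>: "0 < \<rho>" "\<rho> \<le> 1/2"
  shows "(3/4) powr ((2 * real m - 1) / 2) / (real m * \<rho>) \<le> integrand m \<rho>"
proof -
  define e where "e = (2 * real m - 1) / (2 * real m)"
  have e: "0 \<le> e" "e \<le> 1" "1 \<le> 2 * e" using m by (auto simp: e_def field_simps)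
  have \<rho>2: "\<rho>^2 \<le> 1/4" using power_mono[OF \<rho>(2), of 2] \<rho> by (simp add: power2_eq_square)
  have num: "(3/4) powr ((2 * real m - 1) / 2) \<le> (1 - \<rho>^2) powr ((2 * real m - 1) / 2)"
    by (rule powr_mono2) (use m \<rho>2 in auto)
  have D: "0 < 1 - (1 - \<rho>^2)^m"
    using one_minus_power_pos[OF m \<rho>(1)] \<rho> by simp
  have "(1 - (1 - \<rho>^2)^m) powr e \<le> (real m * \<rho>^2) powr e"
    using D one_minus_power_le[of \<rho> m] \<rho>2 e(1) by (intro powr_mono2) simp_all
  also have "\<dots> = real m powr e * \<rho> powr (2 * e)"
  proof -
    have "\<rho>^2 = \<rho> powr 2"
      using \<rho> by (simp add: powr_realpow')
    then show ?thesis
      by (simp add: powr_mult powr_powr)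
  qed
  also have "\<dots> \<le> real m * \<rho>"
  proof (rule mult_mono)
    show "real m powr e \<le> real m"
      using powr_mono[of e 1 "real m"] e(2) m by simp
    show "\<rho> powr (2 * e) \<le> \<rho>"
      using powr_mono'[of 1 "2 * e" \<rho>] e(3) \<rho> by simp
  qed (use \<rho> in simp_all)
  finally have den: "(1 - (1 - \<rho>^2)^m) powr e \<le> real m * \<rho>" .
  show ?thesis
    unfolding integrand_def e_def[symmetric]
    using num den D \<rho> by (intro frac_le) auto
qed

lemma filterlim_u_fun_at_right_0:
  assumes m: "m \<ge> 1"
  shows "filterlim (u_fun m) at_top (at_right 0)"
proof -
  define c where "c = (3/4) powr ((2 * real m - 1) / 2) / real m"
  have c: "0 < c" using m by (simp add: c_def)
  have u_ge_log: "c * (ln (1/2) - ln \<alpha>) \<le> u_fun m \<alpha>" if \<alpha>: "0 < \<alpha>" "\<alpha> < 1/2" for \<alpha>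
  proof -
    have int: "integrand m integrable_on {\<alpha>..1}" by (rule integrable_integrand[OF m \<alpha>(1)])
    have log: "((\<lambda>x. c / x) has_integral (c * ln (1/2) - c * ln \<alpha>)) {\<alpha>..1/2}"
      using \<alpha> by (intro fundamental_theorem_of_calculus)
        (auto intro!: derivative_eq_intros simp flip: has_real_derivative_iff_has_vector_derivative)
    have "c * (ln (1/2) - ln \<alpha>) \<le> integral {\<alpha>..1/2} (integrand m)"
      unfolding right_diff_distrib
    proof (rule has_integral_le[OF log integrable_integral])
      show "integrand m integrable_on {\<alpha>..1/2}"
        by (rule integrable_subinterval_real[OF int]) (use \<alpha> in auto)
    qed (use integrand_ge_inverse[OF m] \<alpha> in \<open>auto simp: c_def\<close>)
    also have "\<dots> \<le> integral {\<alpha>..1/2} (integrand m) + integral {1/2..1} (integrand m)"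
      using integrable_integrand[OF m, of "1/2"] integrand_nonneg by (simp add: integral_nonneg)
    also have "\<dots> = u_fun m \<alpha>"
      unfolding u_fun_def using \<alpha> int by (intro Henstock_Kurzweil_Integration.integral_combine) auto
    finally show ?thesis .
  qed
  have "filterlim (\<lambda>x. c * (ln (1/2) + - ln x)) at_top (at_right (0::real))"
    using c ln_at_0 by (intro filterlim_tendsto_pos_mult_at_top filterlim_tendsto_add_at_top)
      (auto simp: filterlim_uminus_at_bot)
  moreover have "eventually (\<lambda>x. c * (ln (1/2) + - ln x) \<le> u_fun m x) (at_right 0)"
    using eventually_at_right_real[of 0 "1/2"] by (rule eventually_mono) (use u_ge_log in auto)
  ultimately show ?thesis
    by (rule filterlim_at_top_mono)
qed

definition gradPhi :: "nat \<Rightarrow> real^3 \<Rightarrow> real^3" where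
  "gradPhi m y = vector [2 * real m * ((y$1)^2 + (y$2)^2)^(m-1) * y$1,
                         2 * real m * ((y$1)^2 + (y$2)^2)^(m-1) * y$2,
                         2 * real m * (y$3)^(2*m-1)]"

lemma has_derivative_Phi:
  assumes "m \<ge> 1"
  shows "(Phi m has_derivative (\<lambda>h. gradPhi m y \<bullet> h)) (at y)"
proof -
  have "(Phi m has_derivative (\<lambda>h. real m * ((y$1)^2 + (y$2)^2)^(m-1) * (2 * y$1 * h$1 + 2 * y$2 * h$2)
      + real (2*m) * (y$3)^(2*m-1) * h$3)) (at y)"
    unfolding Phi_def[abs_def]
    by (auto intro!: derivative_eq_intros bounded_linear.has_derivative[OF bounded_linear_vec_nth]
        simp: algebra_simps)
  moreover have "(\<lambda>h. real m * ((y$1)^2 + (y$2)^2)^(m-1) * (2 * y$1 * h$1 + 2 * y$2 * h$2)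
      + real (2*m) * (y$3)^(2*m-1) * h$3) = (\<lambda>h. gradPhi m y \<bullet> h)"
    by (simp add: fun_eq_iff gradPhi_def inner_vec_def sum_3 algebra_simps)
  ultimately show ?thesis
    by simp
qed

lemma Phi_scaleR: "Phi m (c *\<^sub>R y) = c^(2*m) * Phi m y"
proof -
  have "(c * y$1)^2 + (c * y$2)^2 = c^2 * ((y$1)^2 + (y$2)^2)"
    by algebra
  then have "Phi m (c *\<^sub>R y) = (c^2)^m * ((y$1)^2 + (y$2)^2)^m + (c^2)^m * ((y$3)^2)^m"
    by (simp add: Phi_def power_mult_distrib power_mult)
  also have "\<dots> = c^(2*m) * Phi m y"
    by (simp add: Phi_def power_mult distrib_left)
  finally show ?thesis .
qed

lemma gradPhi_scaleR:
  assumes "m \<ge> 1"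
  shows "gradPhi m (c *\<^sub>R y) = c^(2*m-1) *\<^sub>R gradPhi m y"
proof -
  obtain k where k: "m = Suc k" using assms by (cases m) auto
  have "(c * y$1)^2 + (c * y$2)^2 = c^2 * ((y$1)^2 + (y$2)^2)"
    by algebra
  then have "((c * y$1)^2 + (c * y$2)^2)^k * (c * y$i) = c^(2*k+1) * (((y$1)^2 + (y$2)^2)^k * y$i)" for i
    by (simp add: power_mult_distrib power_mult)
  then show ?thesis
    by (simp add: gradPhi_def k vec_eq_iff forall_3 power_mult_distrib mult_ac)
qed

lemma odd_power_eq_imp_eq:
  fixes x y :: real
  assumes "x ^ (2*k+1) = y ^ (2*k+1)"
  shows "x = y"
proof -
  have "odd (2*k+1)"
    by simp
  then show ?thesis
    using arg_cong[OF assms, of "root (2*k+1)"] by (metis odd_real_root_power_cancel)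
qed

lemma inj_gradPhi:
  assumes "m \<ge> 1" and eq: "gradPhi m y = gradPhi m z"
  shows "y = z"
proof -
  obtain k where k: "m = Suc k" using assms by (cases m) auto
  define p where "p = (y$1)^2 + (y$2)^2"
  define q where "q = (z$1)^2 + (z$2)^2"
  have eq1: "p^k * y$1 = q^k * z$1" and eq2: "p^k * y$2 = q^k * z$2"
    and "(y$3)^(2*k+1) = (z$3)^(2*k+1)"
    using eq by (simp_all add: gradPhi_def k vec_eq_iff forall_3 p_def q_def mult.assoc)
  from this(3) have eq3: "y$3 = z$3"
    by (rule odd_power_eq_imp_eq)
  have "p^(2*k+1) = (p^k * y$1)^2 + (p^k * y$2)^2"
    by (simp add: p_def power_mult_distrib power_mult algebra_simps flip: distrib_left)
  also have "\<dots> = (q^k * z$1)^2 + (q^k * z$2)^2"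
    by (simp only: eq1 eq2)
  also have "\<dots> = q^(2*k+1)"
    by (simp add: q_def power_mult_distrib power_mult algebra_simps flip: distrib_left)
  finally have "p = q"
    by (rule power_eq_imp_eq_base) (simp_all add: p_def q_def)
  then have "y$1 = z$1 \<and> y$2 = z$2"
    using eq1 eq2 by (cases "p = 0") (auto simp: p_def q_def)
  then show ?thesis
    using eq3 by (simp add: vec_eq_iff forall_3)
qed

text \<open>Since gradPhi is homogeneous of odd degree 2m-1, a positive multiple of gradPhi z is
  gradPhi (c z) for some c > 0; injectivity of gradPhi gives y = c z, and Phi = 1 forces c = 1.\<close>

lemma Phi_eq_1_gradPhi_parallel_imp_eq:
  assumes m: "m \<ge> 1" and "Phi m y = 1" "Phi m z = 1"
    and "0 < \<mu>" and grad: "gradPhi m y = \<mu> *\<^sub>R gradPhi m z"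
  shows "y = z"
proof -
  define c where "c = root (2*m-1) \<mu>"
  have c: "0 < c" "c^(2*m-1) = \<mu>"
    using m \<open>0 < \<mu>\<close> by (simp_all add: c_def)
  have "gradPhi m y = gradPhi m (c *\<^sub>R z)"
    using grad c(2) by (simp add: gradPhi_scaleR[OF m])
  then have y: "y = c *\<^sub>R z"
    by (rule inj_gradPhi[OF m])
  have "c^(2*m) = 1^(2*m)"
    using \<open>Phi m y = 1\<close> \<open>Phi m z = 1\<close> by (simp add: y Phi_scaleR)
  then have "c = 1"
    by (rule power_eq_imp_eq_base) (use c m in simp_all)
  then show ?thesis
    by (simp add: y)
qed

lemma inner_fun_eq_imp_eq:
  fixes p q :: "'a::real_inner"
  assumes "(\<lambda>h. p \<bullet> h) = (\<lambda>h. q \<bullet> h)"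
  shows "p = q"
proof -
  have "(p - q) \<bullet> (p - q) = 0"
    using fun_cong[OF assms, of "p - q"] by (simp add: inner_diff_left)
  then show ?thesis
    by simp
qed

lemma bg_map_eqI:
  assumes m: "m \<ge> 1" and "Phi m y = 1" and "0 < \<mu>"
    and grad: "gradPhi m y = \<mu> *\<^sub>R cross3 (d_s f s v) (d_v f s v)"
  shows "bg_map m f s v = y"
  unfolding bg_map_def
proof (rule the_equality)
  show "Phi m y = 1 \<and> (\<exists>\<mu>>0. (Phi m has_derivative
      (\<lambda>h. (\<mu> *\<^sub>R cross3 (d_s f s v) (d_v f s v)) \<bullet> h)) (at y))"
    using assms has_derivative_Phi[OF m, of y] by (metis grad)
next
  fix z assume "Phi m z = 1 \<and> (\<exists>\<nu>>0. (Phi m has_derivative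
      (\<lambda>h. (\<nu> *\<^sub>R cross3 (d_s f s v) (d_v f s v)) \<bullet> h)) (at z))"
  then obtain \<nu> where z: "Phi m z = 1" "0 < \<nu>"
    and "(Phi m has_derivative (\<lambda>h. (\<nu> *\<^sub>R cross3 (d_s f s v) (d_v f s v)) \<bullet> h)) (at z)"
    by blast
  then have "gradPhi m z = \<nu> *\<^sub>R cross3 (d_s f s v) (d_v f s v)"
    by (intro inner_fun_eq_imp_eq has_derivative_unique[OF has_derivative_Phi[OF m]])
  then have "gradPhi m z = (\<nu> / \<mu>) *\<^sub>R gradPhi m y"
    using grad \<open>0 < \<mu>\<close> by simp
  then show "z = y"
    by (rule Phi_eq_1_gradPhi_parallel_imp_eq[OF m z(1) \<open>Phi m y = 1\<close>, rotated])
      (use z(2) \<open>0 < \<mu>\<close> in simp)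
qed

lemma scaleR_cross3_nonzero_unique:
  fixes x y :: "real^3"
  assumes "cross3 x y \<noteq> 0" and "a *\<^sub>R x + b *\<^sub>R y = c *\<^sub>R x + d *\<^sub>R y"
  shows "a = c \<and> b = d"
proof -
  have "(a - c) *\<^sub>R x + (b - d) *\<^sub>R y = 0"
    using assms(2) by (simp add: algebra_simps)
  then have "cross3 ((a - c) *\<^sub>R x + (b - d) *\<^sub>R y) y = 0"
    and "cross3 x ((a - c) *\<^sub>R x + (b - d) *\<^sub>R y) = 0"
    by simp_all
  then have "(a - c) *\<^sub>R cross3 x y = 0" "(b - d) *\<^sub>R cross3 x y = 0"
    by (simp_all add: cross_add_left cross_add_right cross_mult_left cross_mult_right)
  then show ?thesis
    using assms(1) by simp
qed

lemma mink_gauss_curv_diagonal: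
  assumes "cross3 (d_s f s v) (d_v f s v) \<noteq> 0"
    and "d_s (bg_map m f) s v = \<kappa>\<^sub>1 *\<^sub>R d_s f s v"
    and "d_v (bg_map m f) s v = \<kappa>\<^sub>2 *\<^sub>R d_v f s v"
  shows "mink_gauss_curv m f s v = \<kappa>\<^sub>1 * \<kappa>\<^sub>2"
proof -
  define M :: "real^2^2" where "M = vector [vector [\<kappa>\<^sub>1, 0], vector [0, \<kappa>\<^sub>2]]"
  have "dbg_matrix m f s v = M"
    unfolding dbg_matrix_def
  proof (rule the_equality)
    fix N :: "real^2^2"
    assume "d_s (bg_map m f) s v = N$1$1 *\<^sub>R d_s f s v + N$2$1 *\<^sub>R d_v f s v \<and>
      d_v (bg_map m f) s v = N$1$2 *\<^sub>R d_s f s v + N$2$2 *\<^sub>R d_v f s v"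
    then have "N$1$1 = \<kappa>\<^sub>1 \<and> N$2$1 = 0" "N$1$2 = 0 \<and> N$2$2 = \<kappa>\<^sub>2"
      using assms by (auto intro!: scaleR_cross3_nonzero_unique[OF assms(1)])
    then show "N = M"
      by (simp add: M_def vec_eq_iff forall_2)
  qed (simp add: M_def assms)
  then show ?thesis
    by (simp add: mink_gauss_curv_def det_2 M_def)
qed

definition gauss_radius :: "real \<Rightarrow> real" where
  "gauss_radius s = sqrt (1 - s^2)"

definition gauss_height :: "nat \<Rightarrow> real \<Rightarrow> real" where
  "gauss_height m s = (1 - (1 - s^2)^m) powr (1 / (2 * real m))"

lemma gauss_radius_pos: "0 < s \<Longrightarrow> s < 1 \<Longrightarrow> 0 < gauss_radius s"
  by (simp add: gauss_radius_def power_less_one_iff)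

lemma gauss_radius_power:
  assumes "0 < s" "s < 1"
  shows "gauss_radius s ^ (2*k) = (1 - s^2)^k"
  using assms by (simp add: gauss_radius_def power_mult power_less_one_iff less_imp_le)

lemma gauss_height_pos: "m \<ge> 1 \<Longrightarrow> 0 < s \<Longrightarrow> s < 1 \<Longrightarrow> 0 < gauss_height m s"
  using one_minus_power_pos[of m s] by (simp add: gauss_height_def)

lemma gauss_height_powr:
  assumes "m \<ge> 1" "0 < s" "s < 1"
  shows "gauss_height m s ^ k = (1 - (1 - s^2)^m) powr (real k / (2 * real m))"
  using one_minus_power_pos[of m s] assms by (simp add: gauss_height_def powr_power)

lemma gauss_radius_height_on_meridian:
  assumes "m \<ge> 1" "0 < s" "s < 1"
  shows "gauss_radius s ^ (2*m) + gauss_height m s ^ (2*m) = 1"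
  using gauss_height_powr[OF assms, of "2*m"] one_minus_power_pos[of m s] assms
  by (simp add: gauss_radius_power)

lemma integrand_eq_gauss:
  assumes "m \<ge> 1" "0 < s" "s < 1"
  shows "integrand m s = gauss_radius s ^ (2*m-1) / gauss_height m s ^ (2*m-1)"
proof -
  have pos: "0 < 1 - s^2"
    using assms by (simp add: power_less_one_iff)
  have "gauss_radius s = (1 - s^2) powr (1/2)"
    using pos by (simp add: gauss_radius_def powr_half_sqrt)
  then have "gauss_radius s ^ (2*m-1) = (1 - s^2) powr (real (2*m-1) * (1/2))"
    using pos by (simp add: powr_power)
  then show ?thesis
    using gauss_height_powr[OF assms, of "2*m-1"] assms by (simp add: integrand_def of_nat_diff)
qed

lemma has_real_derivative_gauss_radius:
  assumes "0 < s" "s < 1"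
  shows "(gauss_radius has_real_derivative - s / gauss_radius s) (at s)"
proof -
  have "0 < 1 - s^2"
    using assms by (simp add: power_less_one_iff)
  then have "((\<lambda>x. sqrt (1 - x^2)) has_real_derivative inverse (sqrt (1 - s^2)) / 2 * (0 - 2 * s)) (at s)"
    by (intro DERIV_chain2[OF DERIV_real_sqrt]) (auto intro!: derivative_eq_intros)
  then show ?thesis
    by (simp add: gauss_radius_def[abs_def] field_simps)
qed

lemma has_real_derivative_gauss_height:
  assumes m: "m \<ge> 1" and s: "0 < s" "s < 1"
  shows "(gauss_height m has_real_derivative s * integrand m s / gauss_radius s) (at s)"
proof -
  define D where "D = 1 - (1 - s^2)^m"
  define H where "H = gauss_height m s ^ (2*m-1)"
  have D: "0 < D"
    using one_minus_power_pos[OF m s(1)] s by (simp add: D_def)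
  have H: "0 < H"
    using gauss_height_pos[OF m s] by (simp add: H_def)
  have dg: "((\<lambda>x. 1 - (1 - x^2)^m) has_real_derivative 0 - real m * (1 - s^2)^(m-1) * (0 - 2 * s)) (at s)"
    by (auto intro!: derivative_eq_intros)
  have dh: "(gauss_height m has_real_derivative
      1 / (2 * real m) * D powr (1 / (2 * real m) - 1) * (0 - real m * (1 - s^2)^(m-1) * (0 - 2 * s))) (at s)"
    unfolding gauss_height_def[abs_def] using DERIV_fun_powr[OF dg, of "1 / (2 * real m)"] D
    by (simp add: D_def)
  have "1 / (2 * real m) - 1 = - (real (2*m-1) / (2 * real m))"
    using m by (simp add: of_nat_diff field_simps)
  then have "D powr (1 / (2 * real m) - 1) = 1 / H"
    using gauss_height_powr[OF m s, of "2*m-1"] by (simp add: D_def H_def powr_minus_divide)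
  then have "1 / (2 * real m) * D powr (1 / (2 * real m) - 1) * (0 - real m * (1 - s^2)^(m-1) * (0 - 2 * s))
      = s * gauss_radius s ^ (2*(m-1)) / H"
    using m H by (simp add: gauss_radius_power[OF s] field_simps)
  also have "\<dots> = s * integrand m s / gauss_radius s"
  proof -
    have "2*m-1 = Suc (2*(m-1))"
      using m by simp
    then have "gauss_radius s ^ (2*m-1) = gauss_radius s * gauss_radius s ^ (2*(m-1))"
      by (simp only: power_Suc)
    then show ?thesis
      using gauss_radius_pos[OF s] by (simp add: integrand_eq_gauss[OF m s] H_def)
  qed
  finally show ?thesis
    using dh by simp
qed

lemma has_vector_derivative_vector3:
  assumes "(f1 has_real_derivative d1) (at x)" "(f2 has_real_derivative d2) (at x)"
    "(f3 has_real_derivative d3) (at x)"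
  shows "((\<lambda>x. vector [f1 x, f2 x, f3 x] :: real^3) has_vector_derivative vector [d1, d2, d3]) (at x)"
proof -
  have split: "(vector [a, b, c] :: real^3) = a *\<^sub>R vector [1, 0, 0] + b *\<^sub>R vector [0, 1, 0] + c *\<^sub>R vector [0, 0, 1]"
    for a b c :: real
    by (simp add: vec_eq_iff forall_3)
  have "((\<lambda>x. f1 x *\<^sub>R (vector [1, 0, 0] :: real^3) + f2 x *\<^sub>R vector [0, 1, 0] + f3 x *\<^sub>R vector [0, 0, 1])
      has_vector_derivative d1 *\<^sub>R vector [1, 0, 0] + d2 *\<^sub>R vector [0, 1, 0] + d3 *\<^sub>R vector [0, 0, 1]) (at x)"
    using assms by (auto intro!: derivative_eq_intros)
  then show ?thesis
    by (simp only: split[symmetric])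
qed

definition rot_surface :: "nat \<Rightarrow> real \<Rightarrow> real \<Rightarrow> real \<Rightarrow> real^3" where
  "rot_surface m \<sigma> s t = vector [s * cos t, s * sin t, \<sigma> * u_fun m s]"

definition rot_gauss_map :: "nat \<Rightarrow> real \<Rightarrow> real \<Rightarrow> real \<Rightarrow> real^3" where
  "rot_gauss_map m \<sigma> s t = vector [\<sigma> * gauss_radius s * cos t, \<sigma> * gauss_radius s * sin t, gauss_height m s]"

lemma rot_surface_has_derivative_s:
  assumes "m \<ge> 1" "0 < s" "s < 1"
  shows "((\<lambda>x. rot_surface m \<sigma> x t) has_vector_derivative vector [cos t, sin t, - \<sigma> * integrand m s]) (at s)"
  unfolding rot_surface_def
  using has_real_derivative_u_fun[OF assms]
  by (auto intro!: has_vector_derivative_vector3 derivative_eq_intros)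

lemma rot_surface_has_derivative_t:
  "((\<lambda>x. rot_surface m \<sigma> s x) has_vector_derivative vector [- s * sin t, s * cos t, 0]) (at t)"
  unfolding rot_surface_def by (auto intro!: has_vector_derivative_vector3 derivative_eq_intros)

lemma d_s_rot_surface:
  "m \<ge> 1 \<Longrightarrow> 0 < s \<Longrightarrow> s < 1 \<Longrightarrow> d_s (rot_surface m \<sigma>) s t = vector [cos t, sin t, - \<sigma> * integrand m s]"
  unfolding d_s_def by (rule vector_derivative_at[OF rot_surface_has_derivative_s])

lemma d_v_rot_surface: "d_v (rot_surface m \<sigma>) s t = vector [- s * sin t, s * cos t, 0]"
  unfolding d_v_def by (rule vector_derivative_at[OF rot_surface_has_derivative_t])

lemma cross3_rot_surface:
  assumes "m \<ge> 1" "0 < s" "s < 1"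
  shows "cross3 (d_s (rot_surface m \<sigma>) s t) (d_v (rot_surface m \<sigma>) s t) =
    vector [\<sigma> * integrand m s * s * cos t, \<sigma> * integrand m s * s * sin t, s]"
proof -
  have "s * (cos t * cos t) + s * (sin t * sin t) = s"
    using sin_cos_squared_add3[of t] by (metis distrib_left mult.right_neutral)
  then show ?thesis
    by (simp add: d_s_rot_surface[OF assms] d_v_rot_surface cross3_def vec_eq_iff forall_3 algebra_simps)
qed

lemma bg_map_rot_surface:
  assumes m: "m \<ge> 1" and \<sigma>: "\<sigma>^2 = 1" and s: "0 < s" "s < 1"
  shows "bg_map m (rot_surface m \<sigma>) s t = rot_gauss_map m \<sigma> s t"
proof (rule bg_map_eqI[OF m])
  define r where "r = gauss_radius s"
  define h where "h = gauss_height m s"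
  have h: "0 < h"
    using gauss_height_pos[OF m s] by (simp add: h_def)
  have circle: "(\<sigma> * r * cos t)^2 + (\<sigma> * r * sin t)^2 = r^2"
    using \<sigma> by (simp add: power_mult_distrib flip: distrib_left)
  show "Phi m (rot_gauss_map m \<sigma> s t) = 1"
    using gauss_radius_height_on_meridian[OF m s]
    by (simp add: Phi_def rot_gauss_map_def circle power_mult flip: r_def h_def)
  show "0 < 2 * real m * h^(2*m-1) / s"
    using m h s by simp
  have "2*m-1 = Suc (2*(m-1))"
    using m by simp
  then have rpow: "(r^2)^(m-1) * r = r^(2*m-1)"
    by (simp add: power_mult)
  have grad_xy: "2 * real m * ((\<sigma> * r * cos t)^2 + (\<sigma> * r * sin t)^2)^(m-1) * (\<sigma> * r * x)
      = 2 * real m * r^(2*m-1) * \<sigma> * x" for x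
    unfolding circle rpow[symmetric] by (simp only: mult_ac)
  have "gradPhi m (rot_gauss_map m \<sigma> s t) =
      vector [2 * real m * r^(2*m-1) * \<sigma> * cos t, 2 * real m * r^(2*m-1) * \<sigma> * sin t, 2 * real m * h^(2*m-1)]"
    unfolding gradPhi_def rot_gauss_map_def vector_3 r_def[symmetric] h_def[symmetric] grad_xy ..
  then show "gradPhi m (rot_gauss_map m \<sigma> s t) = (2 * real m * h^(2*m-1) / s) *\<^sub>R
      cross3 (d_s (rot_surface m \<sigma>) s t) (d_v (rot_surface m \<sigma>) s t)"
    using h s
    by (simp add: cross3_rot_surface[OF m s] integrand_eq_gauss[OF m s] vec_eq_iff forall_3
        flip: r_def h_def)
qed

lemma rot_gauss_map_has_derivative_s:
  assumes m: "m \<ge> 1" and \<sigma>: "\<sigma>^2 = 1" and s: "0 < s" "s < 1"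
  shows "((\<lambda>x. rot_gauss_map m \<sigma> x t) has_vector_derivative
    (- \<sigma> * s / gauss_radius s) *\<^sub>R vector [cos t, sin t, - \<sigma> * integrand m s]) (at s)"
proof -
  have "((\<lambda>x. rot_gauss_map m \<sigma> x t) has_vector_derivative
      vector [\<sigma> * (- s / gauss_radius s) * cos t, \<sigma> * (- s / gauss_radius s) * sin t,
        s * integrand m s / gauss_radius s]) (at s)"
    unfolding rot_gauss_map_def
    using has_real_derivative_gauss_radius[OF s] has_real_derivative_gauss_height[OF m s]
    by (intro has_vector_derivative_vector3) (auto intro!: derivative_eq_intros)
  moreover have "vector [\<sigma> * (- s / gauss_radius s) * cos t, \<sigma> * (- s / gauss_radius s) * sin t,
        s * integrand m s / gauss_radius s]
      = (- \<sigma> * s / gauss_radius s) *\<^sub>R (vector [cos t, sin t, - \<sigma> * integrand m s] :: real^3)"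
    using \<sigma> by (simp add: vec_eq_iff forall_3 power2_eq_square)
  ultimately show ?thesis
    by simp
qed

lemma rot_gauss_map_has_derivative_t:
  assumes "s \<noteq> 0"
  shows "((\<lambda>x. rot_gauss_map m \<sigma> s x) has_vector_derivative
    (\<sigma> * gauss_radius s / s) *\<^sub>R vector [- s * sin t, s * cos t, 0]) (at t)"
proof -
  have "((\<lambda>x. rot_gauss_map m \<sigma> s x) has_vector_derivative
      vector [- (\<sigma> * gauss_radius s * sin t), \<sigma> * gauss_radius s * cos t, 0]) (at t)"
    unfolding rot_gauss_map_def
    by (intro has_vector_derivative_vector3) (auto intro!: derivative_eq_intros)
  moreover have "vector [- (\<sigma> * gauss_radius s * sin t), \<sigma> * gauss_radius s * cos t, 0]
      = (\<sigma> * gauss_radius s / s) *\<^sub>R (vector [- s * sin t, s * cos t, 0] :: real^3)"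
    using assms by (simp add: vec_eq_iff forall_3)
  ultimately show ?thesis
    by simp
qed

lemma bg_map_rot_surface_has_derivative_s:
  assumes "m \<ge> 1" "\<sigma>^2 = 1" "0 < s" "s < 1"
  shows "((\<lambda>x. bg_map m (rot_surface m \<sigma>) x t) has_vector_derivative
    (- \<sigma> * s / gauss_radius s) *\<^sub>R vector [cos t, sin t, - \<sigma> * integrand m s]) (at s)"
  using assms bg_map_rot_surface[OF assms(1,2)]
  by (intro has_vector_derivative_transform_within_open[OF rot_gauss_map_has_derivative_s[OF assms],
        of "{0<..<1}"]) auto

lemma bg_map_rot_surface_has_derivative_t:
  assumes "m \<ge> 1" "\<sigma>^2 = 1" "0 < s" "s < 1"
  shows "((\<lambda>x. bg_map m (rot_surface m \<sigma>) s x) has_vector_derivative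
    (\<sigma> * gauss_radius s / s) *\<^sub>R vector [- s * sin t, s * cos t, 0]) (at t)"
  using rot_gauss_map_has_derivative_t[of s m \<sigma> t] bg_map_rot_surface[OF assms] assms(3)
  by simp

lemma rot_surface_regular_curvature:
  assumes m: "m \<ge> 1" and \<sigma>: "\<sigma>^2 = 1" and s: "0 < s" "s < 1"
  shows "(\<lambda>x. rot_surface m \<sigma> x t) differentiable (at s)
    \<and> (\<lambda>x. rot_surface m \<sigma> s x) differentiable (at t)
    \<and> cross3 (d_s (rot_surface m \<sigma>) s t) (d_v (rot_surface m \<sigma>) s t) \<noteq> 0
    \<and> (\<lambda>x. bg_map m (rot_surface m \<sigma>) x t) differentiable (at s)
    \<and> (\<lambda>x. bg_map m (rot_surface m \<sigma>) s x) differentiable (at t)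
    \<and> mink_gauss_curv m (rot_surface m \<sigma>) s t = -1"
proof -
  have regular: "cross3 (d_s (rot_surface m \<sigma>) s t) (d_v (rot_surface m \<sigma>) s t) \<noteq> 0"
    using s by (simp add: cross3_rot_surface[OF m s] vec_eq_iff forall_3)
  have "d_s (bg_map m (rot_surface m \<sigma>)) s t = (- \<sigma> * s / gauss_radius s) *\<^sub>R d_s (rot_surface m \<sigma>) s t"
    unfolding d_s_def d_s_rot_surface[OF m s, unfolded d_s_def]
    by (rule vector_derivative_at[OF bg_map_rot_surface_has_derivative_s[OF m \<sigma> s]])
  moreover have "d_v (bg_map m (rot_surface m \<sigma>)) s t = (\<sigma> * gauss_radius s / s) *\<^sub>R d_v (rot_surface m \<sigma>) s t"
    unfolding d_v_def d_v_rot_surface[unfolded d_v_def]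
    by (rule vector_derivative_at[OF bg_map_rot_surface_has_derivative_t[OF m \<sigma> s]])
  ultimately have "mink_gauss_curv m (rot_surface m \<sigma>) s t = (- \<sigma> * s / gauss_radius s) * (\<sigma> * gauss_radius s / s)"
    by (rule mink_gauss_curv_diagonal[OF regular])
  also have "\<dots> = -1"
    using \<sigma> s gauss_radius_pos[OF s] by (simp add: power2_eq_square)
  finally show ?thesis
    using regular differentiableI_vector rot_surface_has_derivative_s[OF m s] rot_surface_has_derivative_t
      bg_map_rot_surface_has_derivative_s[OF m \<sigma> s] bg_map_rot_surface_has_derivative_t[OF m \<sigma> s]
    by blast
qed

theorem mainTheorem6:
  fixes m :: nat
  assumes "m \<ge> 2"
  shows "(\<forall>\<alpha>\<in>{0<..<1}. integrand m integrable_on {\<alpha>..1})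
    \<and> (u_fun m \<longlongrightarrow> 0) (at_left 1)
    \<and> (\<forall>\<alpha>\<in>{0<..<1}. u_fun m differentiable (at \<alpha>))
    \<and> (deriv (u_fun m) \<longlongrightarrow> 0) (at_left 1)
    \<and> filterlim (u_fun m) at_top (at_right 0)
    \<and> (\<forall>\<sigma>\<in>{1, -1::real}. \<forall>\<alpha>\<in>{0<..<1}. \<forall>v::real.
         let f = (\<lambda>s t. vector [s * cos t, s * sin t, \<sigma> * u_fun m s] :: real^3) in
           (\<lambda>t. f t v) differentiable (at \<alpha>) \<and> (\<lambda>t. f \<alpha> t) differentiable (at v)
           \<and> cross3 (d_s f \<alpha> v) (d_v f \<alpha> v) \<noteq> 0
           \<and> (\<lambda>t. bg_map m f t v) differentiable (at \<alpha>)
           \<and> (\<lambda>t. bg_map m f \<alpha> t) differentiable (at v)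
           \<and> mink_gauss_curv m f \<alpha> v = -1)"
proof -
  have m: "m \<ge> 1"
    using assms by simp
  have "u_fun m differentiable (at \<alpha>)" if "\<alpha> \<in> {0<..<1}" for \<alpha>
    using has_real_derivative_u_fun[OF m] that real_differentiable_def by fastforce
  moreover have "(\<lambda>s t. vector [s * cos t, s * sin t, \<sigma> * u_fun m s] :: real^3) = rot_surface m \<sigma>" for \<sigma>
    by (simp add: rot_surface_def[abs_def])
  ultimately show ?thesis
    using integrable_integrand[OF m] tendsto_u_fun_at_left_1[OF m] tendsto_deriv_u_fun_at_left_1[OF m]
      filterlim_u_fun_at_right_0[OF m] rot_surface_regular_curvature[OF m]
    by (auto simp: Let_def)
qed

end
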